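(* Let $\mathcal{H}$ be a hypothesis space of binary classifiers and let $\mathcal{D}_\mathcal{S}$ (source) and $\mathcal{D}_\mathcal{T}$ (target) be distributions over pairs $(X,A)$ with $A\in\{0,1\}$, satisfying covariate shift: $\mathbb{P}_{\mathcal{D}_\mathcal{S}}(X=x)\neq\mathbb{P}_{\mathcal{D}_\mathcal{T}}(X=x)$ and $\mathbb{P}_{\mathcal{D}_\mathcal{S}}(A=a\mid X=x)=\mathbb{P}_{\mathcal{D}_\mathcal{T}}(A=a\mid X=x)$. Let $h\in\mathcal{H}$, $\hat{A}=h(X)\in\{0,1\}$, and let $\hat{Y}$ be a random variable (predicted label) with values in a finite set. Use one-hot encodings with the $\ell_p$-norm ($p\ge1$) as ground metric (for pairs, the $\ell_p$-norm of concatenated one-hot vectors), and compute $I_W(\hat{Y},A)$ and $I_W(\hat{Y},\hat{A})$ under the target distribution. Let $\varepsilon_\mathcal{S}=\mathbb{P}_{\mathcal{D}_\mathcal{S}}(\hat{A}\neq A)$. Then $$I_W(\hat{Y},A)\le I_W(\hat{Y},\hat{A})+2\sqrt[p]{2}\left(\varepsilon_\mathcal{S}+\tfrac{1}{2}d_{\mathcal{H}\Delta\mathcal{H}}(\tilde{\mathcal{D}}_\mathcal{S},\tilde{\mathcal{D}}_\mathcal{T})+\lambda\right),$$ where $\tilde{\mathcal{D}}_\mathcal{S},\tilde{\mathcal{D}}_\mathcal{T}$ are the marginal feature distributions of $X$, and $\lambda=\lambda_\mathcal{S}+\lambda_\mathcal{T}$ with $\lambda_\mathcal{S}=\varepsilon_\mathcal{S}(h^*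 )$, $\lambda_\mathcal{T}=\varepsilon_\mathcal{T}(h^* )$ for $h^*\in\arg\min_{h'\in\mathcal{H}}\big(\varepsilon_\mathcal{S}(h')+\varepsilon_\mathcal{T}(h')\big)$.
   Context: For random variables $U,V$, $I_W(U,V)=W_1(p(U,V),p(U)p(V))$ is the Wasserstein Dependency Measure, with $W_1$ the 1-Wasserstein distance for the ground metric, $p(U,V)$ the joint law and $p(U)p(V)$ the product of marginals. For $h'\in\mathcal{H}$, $\varepsilon_\mathcal{S}(h')=\mathbb{P}_{\mathcal{D}_\mathcal{S}}(h'(X)\neq A)$ and $\varepsilon_\mathcal{T}(h')=\mathbb{P}_{\mathcal{D}_\mathcal{T}}(h'(X)\neq A)$. The $\mathcal{H}\Delta\mathcal{H}$-divergence between marginal distributions $\tilde{\mathcal{D}}_\mathcal{S},\tilde{\mathcal{D}}_\mathcal{T}$ is $d_{\mathcal{H}\Delta\mathcal{H}}(\tilde{\mathcal{D}}_\mathcal{S},\tilde{\mathcal{D}}_\mathcal{T})=2\sup_{h_1,h_2\in\mathcal{H}}\left|\mathbb{P}_{\tilde{\mathcal{D}}_\mathcal{S}}(h_1(X)\neq h_2(X))-\mathbb{P}_{\tilde{\mathcal{D}}_\mathcal{T}}(h_1(X)\neq h_2(X))\right|$. *)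

theory Defs
  imports "HOL-Probability.Probability"
begin

definition onehot :: "'a \<Rightarrow> 'a \<Rightarrow> real" where
  "onehot a = (\<lambda>i. if i = a then 1 else 0)"

definition lp_norm :: "real \<Rightarrow> ('i::finite \<Rightarrow> real) \<Rightarrow> real" where
  "lp_norm p v = (\<Sum>i\<in>UNIV. \<bar>v i\<bar> powr p) powr (1 / p)"

definition concat_vec :: "('i \<Rightarrow> real) \<Rightarrow> ('j \<Rightarrow> real) \<Rightarrow> ('i + 'j \<Rightarrow> real)" where
  "concat_vec u v = case_sum u v"

definition onehot_pair_dist ::
  "real \<Rightarrow> ('a::finite \<times> 'b::finite) \<Rightarrow> ('a \<times> 'b) \<Rightarrow> real" where
  "onehot_pair_dist p u w =
     lp_norm p (\<lambda>i. concat_vec (onehot (fst u)) (onehot (snd u)) i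
                   - concat_vec (onehot (fst w)) (onehot (snd w)) i)"

definition couplings :: "'a pmf \<Rightarrow> 'a pmf \<Rightarrow> ('a \<times> 'a) pmf set" where
  "couplings P Q = {R. map_pmf fst R = P \<and> map_pmf snd R = Q}"

definition wasserstein1 :: "('a \<Rightarrow> 'a \<Rightarrow> real) \<Rightarrow> 'a pmf \<Rightarrow> 'a pmf \<Rightarrow> real" where
  "wasserstein1 d P Q =
     (INF R\<in>couplings P Q. measure_pmf.expectation R (\<lambda>(u, w). d u w))"

definition wdm :: "('u \<times> 'v \<Rightarrow> 'u \<times> 'v \<Rightarrow> real) \<Rightarrow> ('u \<times> 'v) pmf \<Rightarrow> real" where
  "wdm d J = wasserstein1 d J (pair_pmf (map_pmf fst J) (map_pmf snd J))"

definition err :: "('x \<times> bool) pmf \<Rightarrow> ('x \<Rightarrow> bool) \<Rightarrow> real" where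
  "err D h = measure_pmf.prob D {(x, a). h x \<noteq> a}"

definition condA :: "('x \<times> bool) pmf \<Rightarrow> 'x \<Rightarrow> bool \<Rightarrow> real" where
  "condA D x a = measure_pmf.prob D {(x, a)} / pmf (map_pmf fst D) x"

definition HdH_div :: "('x \<Rightarrow> bool) set \<Rightarrow> 'x pmf \<Rightarrow> 'x pmf \<Rightarrow> real" where
  "HdH_div H P Q = 2 * (SUP hh\<in>H \<times> H.
      \<bar>measure_pmf.prob P {x. fst hh x \<noteq> snd hh x}
       - measure_pmf.prob Q {x. fst hh x \<noteq> snd hh x}\<bar>)"

end

theory Submission
  imports Defs
begin

text \<open>On pairs (predicted label, label) the ground metric is \<open>(2 \<cdot> Hamming distance) powr (1/p)\<close>,
  a metric for \<open>p \<ge> 1\<close>, so by gluing couplings \<open>W\<^sub>1\<close> satisfies the triangle inequality.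
  Replacing the second coordinate \<open>A\<close> by \<open>h X\<close> moves the joint law, and likewise the product of
  its marginals, by at most \<open>2 powr (1/p) \<cdot> P(h X \<noteq> A)\<close> in \<open>W\<^sub>1\<close>: couple each law with its
  relabelled copy. Two triangle inequalities therefore give
  \<open>I\<^sub>W(Y, A) \<le> I\<^sub>W(Y, h X) + 2 \<cdot> 2 powr (1/p) \<cdot> \<epsilon>\<^sub>T(h)\<close>, and the domain adaptation bound of
  Ben-David et al. bounds \<open>\<epsilon>\<^sub>T(h)\<close> by \<open>\<epsilon>\<^sub>S(h) + d\<^sub>H\<^sub>\<Delta>\<^sub>H / 2 + \<lambda>\<close>.\<close>

definition pair_hamming :: "'a \<times> 'b \<Rightarrow> 'a \<times> 'b \<Rightarrow> real" where
  "pair_hamming u w = of_bool (fst u \<noteq> fst w) + of_bool (snd u \<noteq> snd w)"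

lemma pair_hamming_triangle: "pair_hamming u w \<le> pair_hamming u v + pair_hamming v w"
  by (auto simp: pair_hamming_def)

lemma sum_onehot_diff_powr:
  fixes y y' :: "'a::finite"
  assumes "p > 0"
  shows "(\<Sum>i\<in>UNIV. \<bar>onehot y i - onehot y' i\<bar> powr p) = 2 * of_bool (y \<noteq> y')"
proof (cases "y = y'")
  case False
  then have "(\<Sum>i\<in>UNIV. \<bar>onehot y i - onehot y' i\<bar> powr p)
      = (\<Sum>i\<in>UNIV. of_bool (i = y) + of_bool (i = y') :: real)"
    using assms by (intro sum.cong) (auto simp: onehot_def)
  with False show ?thesis by (simp add: sum.distrib)
qed (simp add: onehot_def)

lemma onehot_pair_dist_eq_hamming:
  fixes u w :: "'a::finite \<times> 'b::finite"
  assumes "p > 0"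
  shows "onehot_pair_dist p u w = (2 * pair_hamming u w) powr (1 / p)"
proof -
  have "(\<Sum>i\<in>UNIV. \<bar>concat_vec (onehot (fst u)) (onehot (snd u)) i
                     - concat_vec (onehot (fst w)) (onehot (snd w)) i\<bar> powr p)
      = (\<Sum>i\<in>UNIV. \<bar>onehot (fst u) i - onehot (fst w) i\<bar> powr p)
        + (\<Sum>i\<in>UNIV. \<bar>onehot (snd u) i - onehot (snd w) i\<bar> powr p)"
    by (subst UNIV_Plus_UNIV [symmetric], subst sum.Plus) (auto simp: concat_vec_def)
  then show ?thesis
    using assms by (simp add: onehot_pair_dist_def lp_norm_def pair_hamming_def sum_onehot_diff_powr)
qed

lemma powr_add_le_add_powr:
  fixes a b r :: real
  assumes "0 \<le> a" "0 \<le> b" "0 < r" "r \<le> 1"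
  shows "(a + b) powr r \<le> a powr r + b powr r"
proof (cases "a + b = 0")
  case False
  define s where "s = a + b"
  have s: "s > 0" using assms False by (simp add: s_def)
  have frac_le: "x / s \<le> (x / s) powr r" if "0 \<le> x" "x \<le> s" for x
    using powr_mono'[of r 1 "x / s"] that s assms by simp
  have "s powr r = s powr r * (a / s + b / s)"
    using s by (simp add: s_def add_divide_distrib [symmetric])
  also have "\<dots> \<le> s powr r * ((a / s) powr r + (b / s) powr r)"
    using assms frac_le[of a] frac_le[of b] by (intro mult_left_mono add_mono) (auto simp: s_def)
  also have "\<dots> = a powr r + b powr r"
    using s by (simp add: powr_divide distrib_left)
  finally show ?thesis by (simp add: s_def)
qed (use assms in simp)

lemma onehot_pair_dist_triangle:
  fixes u v w :: "'a::finite \<times> 'b::finite"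
  assumes "p \<ge> 1"
  shows "onehot_pair_dist p u w \<le> onehot_pair_dist p u v + onehot_pair_dist p v w"
proof -
  have r: "0 < 1 / p" "1 / p \<le> 1" using assms by auto
  have nonneg: "0 \<le> pair_hamming u v" "0 \<le> pair_hamming v w"
    by (simp_all add: pair_hamming_def)
  have "(2 * pair_hamming u w) powr (1 / p) \<le> (2 * pair_hamming u v + 2 * pair_hamming v w) powr (1 / p)"
    using pair_hamming_triangle[of u w v] r by (intro powr_mono2) (auto simp: pair_hamming_def)
  also have "\<dots> \<le> (2 * pair_hamming u v) powr (1 / p) + (2 * pair_hamming v w) powr (1 / p)"
    using nonneg r by (intro powr_add_le_add_powr) auto
  finally show ?thesis using assms by (simp add: onehot_pair_dist_eq_hamming)
qed

lemma onehot_pair_dist_nonneg: "onehot_pair_dist p u w \<ge> 0"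
  by (simp add: onehot_pair_dist_def lp_norm_def)

lemma onehot_pair_dist_le:
  fixes u w :: "'a::finite \<times> 'b::finite"
  assumes "p > 0"
  shows "onehot_pair_dist p u w \<le> 4 powr (1 / p)"
  using assms by (auto simp: onehot_pair_dist_eq_hamming pair_hamming_def intro!: powr_mono2)

lemma onehot_pair_dist_same_fst:
  fixes y :: "'a::finite" and b b' :: "'b::finite"
  assumes "p > 0"
  shows "onehot_pair_dist p (y, b) (y, b') = 2 powr (1 / p) * of_bool (b \<noteq> b')"
  using assms by (simp add: onehot_pair_dist_eq_hamming pair_hamming_def)

lemma couplings_nonempty: "couplings P Q \<noteq> {}"
  using map_fst_pair_pmf map_snd_pair_pmf unfolding couplings_def by blast

lemma pmf_gluing:
  fixes pq :: "('a \<times> 'b) pmf" and qr :: "('b \<times> 'c) pmf"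
  assumes "map_pmf snd pq = map_pmf fst qr"
  obtains pqr where "map_pmf (\<lambda>(a, b, c). (a, b)) pqr = pq" "map_pmf (\<lambda>(a, b, c). (b, c)) pqr = qr"
proof
  define K where "K b = cond_pmf qr {bc. fst bc = b}" for b
  define pqr where "pqr = bind_pmf pq (\<lambda>ab. map_pmf (\<lambda>bc. (fst ab, bc)) (K (snd ab)))"
  have set_K: "set_pmf (K (snd ab)) = set_pmf qr \<inter> {bc. fst bc = snd ab}" if "ab \<in> set_pmf pq" for ab
  proof -
    have "snd ab \<in> set_pmf (map_pmf fst qr)"
      using that assms [symmetric] by force
    then show ?thesis unfolding K_def by (intro set_cond_pmf) force
  qed
  have "map_pmf (\<lambda>(a, b, c). (a, b)) pqr = bind_pmf pq (\<lambda>ab. map_pmf (\<lambda>_. ab) (K (snd ab)))"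
    unfolding pqr_def map_bind_pmf map_pmf_comp
    by (intro bind_pmf_cong refl map_pmf_cong) (auto simp: set_K)
  then show "map_pmf (\<lambda>(a, b, c). (a, b)) pqr = pq"
    by (simp add: map_pmf_const bind_return_pmf')
  have "map_pmf (\<lambda>(a, b, c). (b, c)) pqr = bind_pmf (map_pmf snd pq) K"
    unfolding pqr_def map_bind_pmf bind_map_pmf
    by (intro bind_pmf_cong refl) (simp add: map_pmf_comp split_beta)
  also have "\<dots> = qr"
    unfolding assms K_def
    by (rule bind_cond_pmf_cancel) (force, force, auto simp: vimage_def eq_commute)
  finally show "map_pmf (\<lambda>(a, b, c). (b, c)) pqr = qr" .
qed

definition transport_cost :: "('a \<Rightarrow> 'a \<Rightarrow> real) \<Rightarrow> ('a \<times> 'a) pmf \<Rightarrow> real" where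
  "transport_cost d R = measure_pmf.expectation R (\<lambda>(u, w). d u w)"

lemma wasserstein1_def': "wasserstein1 d P Q = (INF R\<in>couplings P Q. transport_cost d R)"
  by (simp add: wasserstein1_def transport_cost_def)

lemma wasserstein1_le_transport_cost:
  assumes "\<And>u w. d u w \<ge> 0" "R \<in> couplings P Q"
  shows "wasserstein1 d P Q \<le> transport_cost d R"
  unfolding wasserstein1_def'
  using assms by (intro cINF_lower bdd_belowI2[where m = 0])
    (auto simp: transport_cost_def split_beta intro!: Bochner_Integration.integral_nonneg)

lemma wasserstein1_map_le:
  assumes "\<And>u w. d u w \<ge> 0"
  shows "wasserstein1 d (map_pmf f M) (map_pmf g M) \<le> measure_pmf.expectation M (\<lambda>z. d (f z) (g z))"
proof -
  have "map_pmf (\<lambda>z. (f z, g z)) M \<in> couplings (map_pmf f M) (map_pmf g M)"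
    by (simp add: couplings_def map_pmf_comp)
  from wasserstein1_le_transport_cost [OF assms this] show ?thesis
    by (simp add: transport_cost_def)
qed

text \<open>Boundedness of \<open>d\<close> only serves to make every transport cost integrable.\<close>

context
  fixes d :: "'a \<Rightarrow> 'a \<Rightarrow> real" and B :: real
  assumes nonneg: "\<And>u w. d u w \<ge> 0"
    and bounded: "\<And>u w. d u w \<le> B"
    and triangle: "\<And>u v w. d u w \<le> d u v + d v w"
begin

lemma integrable_transport_cost: "integrable (measure_pmf M) (\<lambda>z. d (f z) (g z))"
  using nonneg bounded by (intro measure_pmf.integrable_const_bound [where B = B]) auto

lemma wasserstein1_le_glued_cost:
  assumes R1: "R1 \<in> couplings P Q" and R2: "R2 \<in> couplings Q R"
  shows "wasserstein1 d P R \<le> transport_cost d R1 + transport_cost d R2"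
proof -
  have "map_pmf snd R1 = map_pmf fst R2"
    using R1 R2 by (simp add: couplings_def)
  then obtain E where E1: "map_pmf (\<lambda>(a, b, c). (a, b)) E = R1"
    and E2: "map_pmf (\<lambda>(a, b, c). (b, c)) E = R2"
    by (rule pmf_gluing)
  have "map_pmf (\<lambda>(a, b, c). (a, c)) E \<in> couplings P R"
    using R1 R2 unfolding couplings_def E1 [symmetric] E2 [symmetric]
    by (simp add: map_pmf_comp split_beta)
  from wasserstein1_le_transport_cost [of d, OF nonneg this]
  have "wasserstein1 d P R \<le> measure_pmf.expectation E (\<lambda>(a, b, c). d a c)"
    by (simp add: transport_cost_def case_prod_unfold)
  also have "\<dots> \<le> measure_pmf.expectation E (\<lambda>(a, b, c). d a b + d b c)"
    unfolding case_prod_unfold using triangle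
    by (intro integral_mono Bochner_Integration.integrable_add integrable_transport_cost) auto
  also have "\<dots> = transport_cost d R1 + transport_cost d R2"
    unfolding transport_cost_def E1 [symmetric] E2 [symmetric] case_prod_unfold
    by (simp add: integrable_transport_cost)
  finally show ?thesis .
qed

lemma wasserstein1_triangle: "wasserstein1 d P R \<le> wasserstein1 d P Q + wasserstein1 d Q R"
proof -
  have "wasserstein1 d P R - transport_cost d R2 \<le> wasserstein1 d P Q" if "R2 \<in> couplings Q R" for R2
    unfolding wasserstein1_def' [of d P Q]
    using wasserstein1_le_glued_cost [OF _ that] couplings_nonempty
    by (intro cINF_greatest) (auto simp: algebra_simps)
  then have "wasserstein1 d P R - wasserstein1 d P Q \<le> wasserstein1 d Q R"
    unfolding wasserstein1_def' [of d Q R]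
    using couplings_nonempty by (intro cINF_greatest) (auto simp: algebra_simps)
  then show ?thesis by simp
qed

end

lemma wasserstein1_onehot_relabel_le:
  fixes f :: "'z \<Rightarrow> 'a::finite" and a b :: "'z \<Rightarrow> 'b::finite"
  assumes "p > 0"
  shows "wasserstein1 (onehot_pair_dist p) (map_pmf (\<lambda>z. (f z, a z)) M) (map_pmf (\<lambda>z. (f z, b z)) M)
    \<le> 2 powr (1 / p) * measure_pmf.prob M {z. a z \<noteq> b z}"
proof -
  have "wasserstein1 (onehot_pair_dist p) (map_pmf (\<lambda>z. (f z, a z)) M) (map_pmf (\<lambda>z. (f z, b z)) M)
      \<le> measure_pmf.expectation M (\<lambda>z. onehot_pair_dist p (f z, a z) (f z, b z))"
    by (intro wasserstein1_map_le onehot_pair_dist_nonneg)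
  also have "\<dots> = measure_pmf.expectation M (\<lambda>z. 2 powr (1 / p) * indicator {z. a z \<noteq> b z} z)"
    using assms by (intro Bochner_Integration.integral_cong) (auto simp: onehot_pair_dist_same_fst)
  also have "\<dots> = 2 powr (1 / p) * measure_pmf.prob M {z. a z \<noteq> b z}"
    by simp
  finally show ?thesis .
qed

lemma wdm_onehot_relabel_le:
  fixes f :: "'z \<Rightarrow> 'a::finite" and a b :: "'z \<Rightarrow> 'b::finite"
  assumes p: "p \<ge> 1"
  shows "wdm (onehot_pair_dist p) (map_pmf (\<lambda>z. (f z, a z)) M)
    \<le> wdm (onehot_pair_dist p) (map_pmf (\<lambda>z. (f z, b z)) M)
      + 2 * 2 powr (1 / p) * measure_pmf.prob M {z. a z \<noteq> b z}"
proof -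
  let ?d = "onehot_pair_dist p :: 'a \<times> 'b \<Rightarrow> 'a \<times> 'b \<Rightarrow> real"
  let ?W = "wasserstein1 ?d"
  let ?e = "measure_pmf.prob M {z. a z \<noteq> b z}"
  define J where "J (g :: 'z \<Rightarrow> 'b) = map_pmf (\<lambda>z. (f z, g z)) M" for g
  define F where "F = map_pmf f M"
  define marg_prod
    where "marg_prod (g :: 'z \<Rightarrow> 'b) = map_pmf (\<lambda>w. (fst w, g (snd w))) (pair_pmf F M)" for g
  have wdm_J: "wdm ?d (J g) = ?W (J g) (marg_prod g)" for g
    using map_pair [of id g F M]
    by (simp add: wdm_def J_def F_def marg_prod_def map_pmf_comp case_prod_unfold)
  have triangle: "?W P R \<le> ?W P Q + ?W Q R" for P Q R
    using p by (intro wasserstein1_triangle [where B = "4 powr (1 / p)"]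
        onehot_pair_dist_nonneg onehot_pair_dist_le onehot_pair_dist_triangle) auto
  have "?W (J a) (J b) \<le> 2 powr (1 / p) * ?e"
    unfolding J_def using p by (intro wasserstein1_onehot_relabel_le) auto
  moreover have "?W (marg_prod b) (marg_prod a) \<le> 2 powr (1 / p) * ?e"
  proof -
    have "measure_pmf.prob (pair_pmf F M) {w. b (snd w) \<noteq> a (snd w)} = ?e"
      using measure_map_pmf [of snd "pair_pmf F M" "{z. a z \<noteq> b z}"]
      by (simp add: map_snd_pair_pmf vimage_def eq_commute)
    then show ?thesis
      unfolding marg_prod_def
      using wasserstein1_onehot_relabel_le [where f = fst and a = "\<lambda>w. b (snd w)"
          and b = "\<lambda>w. a (snd w)" and M = "pair_pmf F M"] p
      by simp
  qed
  moreover have "?W (J a) (marg_prod a)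
      \<le> ?W (J a) (J b) + ?W (J b) (marg_prod b) + ?W (marg_prod b) (marg_prod a)"
    using triangle [where P = "J a" and Q = "J b" and R = "marg_prod a"]
      triangle [where P = "J b" and Q = "marg_prod b" and R = "marg_prod a"] by linarith
  ultimately show ?thesis
    unfolding J_def [symmetric] wdm_J by linarith
qed

lemma err_le_disagreement_add_err:
  "err D h \<le> measure_pmf.prob (map_pmf fst D) {x. h x \<noteq> g x} + err D g"
  unfolding err_def measure_map_pmf
  by (rule order_trans [OF measure_pmf.finite_measure_mono measure_subadditive])
    (auto simp: measure_pmf.emeasure_eq_measure)

lemma disagreement_le_err_add_err:
  "measure_pmf.prob (map_pmf fst D) {x. h x \<noteq> g x} \<le> err D h + err D g"
  unfolding err_def measure_map_pmf
  by (rule order_trans [OF measure_pmf.finite_measure_mono measure_subadditive])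
    (auto simp: measure_pmf.emeasure_eq_measure)

lemma disagreement_diff_le_HdH_div:
  assumes "h \<in> H" "g \<in> H"
  shows "\<bar>measure_pmf.prob P {x. h x \<noteq> g x} - measure_pmf.prob Q {x. h x \<noteq> g x}\<bar>
    \<le> 1 / 2 * HdH_div H P Q"
proof -
  let ?gap = "\<lambda>hg. \<bar>measure_pmf.prob P {x. fst hg x \<noteq> snd hg x}
                     - measure_pmf.prob Q {x. fst hg x \<noteq> snd hg x}\<bar>"
  have "\<bar>measure_pmf.prob P A - measure_pmf.prob Q B\<bar> \<le> 1" for A B
    using measure_pmf.prob_le_1 [of P A] measure_pmf.prob_le_1 [of Q B]
      measure_nonneg [of P A] measure_nonneg [of Q B] by linarith
  then have "bdd_above (?gap ` (H \<times> H))"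
    by (intro bdd_aboveI2 [where M = 1])
  then have "?gap (h, g) \<le> (SUP hg\<in>H \<times> H. ?gap hg)"
    using assms by (intro cSUP_upper) auto
  then show ?thesis by (simp add: HdH_div_def)
qed

lemma err_le_domain_adaptation_bound:
  assumes "h \<in> H" "hstar \<in> H"
  shows "err T h \<le> err S h + 1 / 2 * HdH_div H (map_pmf fst S) (map_pmf fst T)
    + (err S hstar + err T hstar)"
  using err_le_disagreement_add_err [of T h hstar] disagreement_le_err_add_err [of S h hstar]
    disagreement_diff_le_HdH_div [OF assms, of "map_pmf fst S" "map_pmf fst T"]
  by linarith

theorem theorem4:
  fixes H :: "('x \<Rightarrow> bool) set"
    and S :: "('x \<times> bool) pmf"
    and T :: "('x \<times> bool \<times> 'y::finite) pmf"
    and h hstar :: "'x \<Rightarrow> bool"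
    and p :: real
  assumes p: "p \<ge> 1"
    and shift: "\<exists>x. pmf (map_pmf fst S) x \<noteq> pmf (map_pmf fst T) x"
    and cond: "\<forall>x a. pmf (map_pmf fst S) x > 0 \<and> pmf (map_pmf fst T) x > 0 \<longrightarrow>
                 condA S x a = condA (map_pmf (\<lambda>(x, a, y). (x, a)) T) x a"
    and hH: "h \<in> H"
    and hstarH: "hstar \<in> H"
    and hstar_min: "\<forall>h'\<in>H. err S hstar + err (map_pmf (\<lambda>(x, a, y). (x, a)) T) hstar
                              \<le> err S h' + err (map_pmf (\<lambda>(x, a, y). (x, a)) T) h'"
  shows "wdm (onehot_pair_dist p) (map_pmf (\<lambda>(x, a, y). (y, a)) T)
         \<le> wdm (onehot_pair_dist p) (map_pmf (\<lambda>(x, a, y). (y, h x)) T)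
           + 2 * (2 powr (1 / p)) * (err S h + 1 / 2 * HdH_div H (map_pmf fst S) (map_pmf fst T)
               + (err S hstar + err (map_pmf (\<lambda>(x, a, y). (x, a)) T) hstar))"
proof -
  define T' where "T' = map_pmf (\<lambda>(x, a, y). (x, a)) T"
  have relabel: "wdm (onehot_pair_dist p) (map_pmf (\<lambda>(x, a, y). (y, a)) T)
      \<le> wdm (onehot_pair_dist p) (map_pmf (\<lambda>(x, a, y). (y, h x)) T) + 2 * 2 powr (1 / p) * err T' h"
    using wdm_onehot_relabel_le [OF p, where f = "\<lambda>(x, a, y). y" and a = "\<lambda>(x, a, y). a"
        and b = "\<lambda>(x, a, y). h x" and M = T]
    by (simp add: T'_def err_def case_prod_unfold vimage_def eq_commute)
  have domain_adaptation: "err T' h \<le> err S h + 1 / 2 * HdH_div H (map_pmf fst S) (map_pmf fst T)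
      + (err S hstar + err T' hstar)"
    using err_le_domain_adaptation_bound [OF hH hstarH, of T' S]
    by (simp add: T'_def map_pmf_comp case_prod_unfold)
  have "(0::real) \<le> 2 * 2 powr (1 / p)" by simp
  from relabel mult_left_mono [OF domain_adaptation this] show ?thesis
    unfolding T'_def [symmetric] by linarith
qed

end
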